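(* Let $A$ be an $m\times n$ matrix with $m\ge n$ such that every square submatrix of $A$ is nonsingular. Then $A$ has rank $n$ and $A$ is completely unsparsifiable, i.e. $\operatorname{nnz}(AX)\ge (m-n+1)n$ for every invertible $n\times n$ matrix $X$. Moreover, the $(n+m)\times n$ matrix $\begin{pmatrix} I_n\\ A\end{pmatrix}$ (the $n\times n$ identity stacked above $A$) is optimally sparse.
   Context: $\operatorname{nnz}(M)$ is the number of nonzero entries of $M$. A matrix $M$ with $k$ columns is optimally sparse if $\operatorname{nnz}(MX)\ge\operatorname{nnz}(M)$ for every invertible $k\times k$ matrix $X$. A square submatrix of $A$ is $A(R,C)$ for row set $R$ and column set $C$ with $|R|=|C|\ge 1$. *)

theory Defs
  imports "Jordan_Normal_Form.DL_Rank" "Jordan_Normal_Form.DL_Submatrix"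
begin

definition nnz :: "'a :: zero mat \<Rightarrow> nat" where
  "nnz M = card {(i, j). i < dim_row M \<and> j < dim_col M \<and> M $$ (i, j) \<noteq> 0}"

definition optimally_sparse :: "'a :: field mat \<Rightarrow> bool" where
  "optimally_sparse M \<longleftrightarrow>
     (\<forall>X \<in> carrier_mat (dim_col M) (dim_col M). invertible_mat X \<longrightarrow> nnz (M * X) \<ge> nnz M)"

definition all_square_submatrices_nonsingular :: "'a :: field mat \<Rightarrow> bool" where
  "all_square_submatrices_nonsingular A \<longleftrightarrow>
     (\<forall>R C. R \<subseteq> {..<dim_row A} \<longrightarrow> C \<subseteq> {..<dim_col A} \<longrightarrow> card R = card C \<longrightarrow> card R \<ge> 1
        \<longrightarrow> det (submatrix A R C) \<noteq> 0)"

end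

theory Submission
  imports Defs "Jordan_Normal_Form.DL_Rank_Submatrix"
begin

(* Write supp v for the set of nonzero positions of a vector v.
   The heart of the argument is an uncertainty principle: if every square
   submatrix of the m x n matrix A is nonsingular and x is a nonzero vector,
   then A x has fewer zero entries than x has nonzero entries, since otherwise
   a square submatrix A(R, supp x) with R among the zero rows of A x would
   annihilate the nonzero restriction of x to its support.  The theorem follows: the rank is n by the nonsingular
   leading n x n minor; each column A x_j of A X satisfies
   |supp (A x_j)| >= m + 1 - n; and each column (x_j; A x_j) of (I; A) X has at
   least m + 1 nonzeros, whereas each column (e_j; A e_j) of (I; A) has at most
   m + 1. *)

definition vec_support :: "'a::zero vec \<Rightarrow> nat set" where
  "vec_support v = {i. i < dim_vec v \<and> v $ i \<noteq> 0}"

definition vnz :: "'a::zero vec \<Rightarrow> nat" where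
  "vnz v = card (vec_support v)"

lemma vnz_le_dim: "vnz v \<le> dim_vec v"
  unfolding vnz_def using card_mono[of "{..<dim_vec v}" "vec_support v"]
  by (auto simp: vec_support_def)

lemma vnz_unit_vec: "vnz (unit_vec n j :: 'a::zero_neq_one vec) \<le> 1"
proof -
  have "vec_support (unit_vec n j :: 'a vec) \<subseteq> {j}"
    by (auto simp: vec_support_def unit_vec_def split: if_splits)
  from card_mono[OF _ this] show ?thesis unfolding vnz_def by simp
qed

lemma vnz_append: "vnz (u @\<^sub>v w) = vnz u + vnz w"
proof -
  let ?shift = "\<lambda>i. i + dim_vec u"
  have split: "vec_support (u @\<^sub>v w) = vec_support u \<union> ?shift ` vec_support w"
  proof (intro equalityI subsetI)
    fix i assume i: "i \<in> vec_support (u @\<^sub>v w)"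
    show "i \<in> vec_support u \<union> ?shift ` vec_support w"
    proof (cases "i < dim_vec u")
      case False
      hence "i = ?shift (i - dim_vec u)" and "i - dim_vec u \<in> vec_support w"
        using i by (auto simp: vec_support_def)
      thus ?thesis by blast
    qed (use i in \<open>auto simp: vec_support_def\<close>)
  qed (auto simp: vec_support_def)
  have "card (?shift ` vec_support w) = vnz w"
    unfolding vnz_def by (rule card_image) (auto simp: inj_on_def)
  moreover have "vec_support u \<inter> ?shift ` vec_support w = {}"
    by (auto simp: vec_support_def)
  ultimately show ?thesis
    unfolding vnz_def split by (subst card_Un_disjoint) (auto simp: vec_support_def)
qed

lemma nnz_by_columns: "nnz M = (\<Sum>j<dim_col M. vnz (col M j))"
proof -
  let ?colset = "\<lambda>j. (\<lambda>i. (i, j)) ` vec_support (col M j)"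
  have "{(i, j). i < dim_row M \<and> j < dim_col M \<and> M $$ (i, j) \<noteq> 0} = (\<Union>j<dim_col M. ?colset j)"
    by (auto simp: vec_support_def)
  moreover have "card (\<Union>j<dim_col M. ?colset j) = (\<Sum>j<dim_col M. card (?colset j))"
    by (rule card_UN_disjoint) (auto simp: vec_support_def)
  moreover have "card (?colset j) = vnz (col M j)" for j
    unfolding vnz_def by (rule card_image) (auto simp: inj_on_def)
  ultimately show ?thesis unfolding nnz_def by simp
qed

lemma nnz_lower_bound:
  assumes "M \<in> carrier_mat r k" and "\<And>j. j < k \<Longrightarrow> c \<le> vnz (col M j)"
  shows "k * c \<le> nnz M"
  unfolding nnz_by_columns using sum_bounded_below[of "{..<k}" c] assms by simp

lemma nnz_upper_bound:
  assumes "M \<in> carrier_mat r k" and "\<And>j. j < k \<Longrightarrow> vnz (col M j) \<le> c"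
  shows "nnz M \<le> k * c"
  unfolding nnz_by_columns using sum_bounded_above[of "{..<k}" _ c] assms by simp

lemma col_append_rows:
  assumes "B \<in> carrier_mat r1 n" "C \<in> carrier_mat r2 n" "j < n"
  shows "col (B @\<^sub>r C) j = col B j @\<^sub>v col C j"
  using assms by (intro eq_vecI) (auto simp: append_rows_def)

text \<open>An invertible matrix has no zero column: a left inverse would map it to a unit vector.\<close>
lemma invertible_col_nonzero:
  assumes X: "X \<in> carrier_mat n n" and inv: "invertible_mat X" and j: "j < n"
  shows "col X j \<noteq> 0\<^sub>v n"
proof
  assume zero: "col X j = 0\<^sub>v n"
  obtain B where BX: "B * X = 1\<^sub>m n" and B: "B \<in> carrier_mat n n"
    using inv X unfolding invertible_mat_def inverts_mat_def square_mat.simps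
    by (metis carrier_matD(1) carrier_matI index_mult_mat(2,3) index_one_mat(2,3))
  have "unit_vec n j = col (B * X) j" using BX j by simp
  also have "\<dots> = B *\<^sub>v 0\<^sub>v n" by (simp only: col_mult2[OF B X j] zero)
  also have "\<dots> = 0\<^sub>v n" using B by auto
  finally have "unit_vec n j $ j = (0\<^sub>v n :: 'a vec) $ j" by simp
  thus False using j by simp
qed

lemma pick_bij: assumes "finite S" shows "bij_betw (pick S) {..<card S} S"
proof -
  have inj: "inj_on (pick S) {..<card S}"
    unfolding inj_on_def by (metis lessThan_iff nat_neq_iff pick_mono)
  have sub: "pick S ` {..<card S} \<subseteq> S" using pick_in_set by auto
  have "card (pick S ` {..<card S}) = card S" using card_image[OF inj] by simp
  hence "pick S ` {..<card S} = S" using card_subset_eq[OF assms sub] by simp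
  thus ?thesis using inj by (simp add: bij_betw_def)
qed

lemma submatrix_carrier:
  assumes A: "A \<in> carrier_mat m n" and R: "R \<subseteq> {..<m}" and S: "S \<subseteq> {..<n}"
  shows "submatrix A R S \<in> carrier_mat (card R) (card S)"
proof -
  have "{i. i < dim_row A \<and> i \<in> R} = R" and "{j. j < dim_col A \<and> j \<in> S} = S"
    using A R S by auto
  thus ?thesis by (intro carrier_matI) (simp_all add: dim_submatrix)
qed

lemma submatrix_mult_restriction:
  assumes A: "A \<in> carrier_mat m n" and x: "x \<in> carrier_vec n"
    and R: "R \<subseteq> {..<m}" and S: "S \<subseteq> {..<n}" and supp: "vec_support x \<subseteq> S"
  shows "submatrix A R S *\<^sub>v vec (card S) (\<lambda>j. x $ pick S j)
         = vec (card R) (\<lambda>i. (A *\<^sub>v x) $ pick R i)"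
proof (rule eq_vecI)
  have B: "submatrix A R S \<in> carrier_mat (card R) (card S)"
    by (rule submatrix_carrier[OF A R S])
  have rows: "{i. i < dim_row A \<and> i \<in> R} = R" and cols: "{j. j < dim_col A \<and> j \<in> S} = S"
    using A R S by auto
  have finS: "finite S" using S finite_subset by blast
  fix i assume "i < dim_vec (vec (card R) (\<lambda>i. (A *\<^sub>v x) $ pick R i))"
  hence i: "i < card R" by simp
  hence r: "pick R i < m" using pick_in_set[of i R] R by auto
  have "(submatrix A R S *\<^sub>v vec (card S) (\<lambda>j. x $ pick S j)) $ i
        = (\<Sum>j<card S. submatrix A R S $$ (i, j) * x $ pick S j)"
    using B i by (simp add: scalar_prod_def atLeast0LessThan)
  also have "\<dots> = (\<Sum>j<card S. A $$ (pick R i, pick S j) * x $ pick S j)"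
    using i submatrix_index[of i A R _ S] unfolding rows cols by simp
  also have "\<dots> = (\<Sum>l\<in>S. A $$ (pick R i, l) * x $ l)"
    using sum.reindex_bij_betw[OF pick_bij[OF finS]] by simp
  also have "\<dots> = (\<Sum>l\<in>{0..<n}. A $$ (pick R i, l) * x $ l)"
    using S supp x by (intro sum.mono_neutral_left) (auto simp: vec_support_def)
  also have "\<dots> = (A *\<^sub>v x) $ pick R i"
    using A x r by (auto simp: mult_mat_vec_def scalar_prod_def)
  finally show "(submatrix A R S *\<^sub>v vec (card S) (\<lambda>j. x $ pick S j)) $ i
        = vec (card R) (\<lambda>i. (A *\<^sub>v x) $ pick R i) $ i" using i by simp
qed (use submatrix_carrier[OF A R S] in simp)

lemma zeros_of_product_lt_support:
  fixes A :: "'a::field mat"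
  assumes A: "A \<in> carrier_mat m n" and ns: "all_square_submatrices_nonsingular A"
    and x: "x \<in> carrier_vec n" and x0: "x \<noteq> 0\<^sub>v n"
  shows "card {i. i < m \<and> (A *\<^sub>v x) $ i = 0} < vnz x"
proof (rule ccontr)
  define S where "S = vec_support x"
  define Z where "Z = {i. i < m \<and> (A *\<^sub>v x) $ i = 0}"
  assume "\<not> card Z < vnz x"
  then obtain R where RZ: "R \<subseteq> Z" and RS: "card R = card S"
    unfolding vnz_def S_def by (meson not_less obtain_subset_with_card_n)
  obtain j0 where j0: "j0 < n" "x $ j0 \<noteq> 0"
    using x x0 by (metis carrier_vecD eq_vecI index_zero_vec)
  have S_sub: "S \<subseteq> {..<n}" and R_sub: "R \<subseteq> {..<m}"
    using x RZ unfolding S_def Z_def vec_support_def by auto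
  have "j0 \<in> S" using j0 x unfolding S_def vec_support_def by simp
  hence S_pos: "card S \<ge> 1"
    using finite_subset[OF S_sub] by (metis One_nat_def Suc_leI card_gt_0_iff empty_iff finite_lessThan)
  let ?B = "submatrix A R S"
  let ?y = "vec (card S) (\<lambda>j. x $ pick S j)"
  have B: "?B \<in> carrier_mat (card S) (card S)"
    using submatrix_carrier[OF A R_sub S_sub] RS by simp
  have "det ?B \<noteq> 0"
    using ns A R_sub S_sub RS S_pos unfolding all_square_submatrices_nonsingular_def by auto
  moreover have "?B *\<^sub>v ?y = 0\<^sub>v (card S)"
  proof -
    have "?B *\<^sub>v ?y = vec (card R) (\<lambda>i. (A *\<^sub>v x) $ pick R i)"
      using submatrix_mult_restriction[OF A x R_sub S_sub] by (simp add: S_def)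
    also have "\<dots> = 0\<^sub>v (card S)"
      using RZ pick_in_set[of _ R] RS by (intro eq_vecI) (auto simp: Z_def)
    finally show ?thesis .
  qed
  moreover have "?y \<noteq> 0\<^sub>v (card S)"
  proof -
    have "pick S 0 \<in> S" using S_pos by (intro pick_in_set) simp
    hence nonzero: "?y $ 0 \<noteq> 0" using S_pos by (simp add: S_def vec_support_def)
    show ?thesis
    proof
      assume zero: "?y = 0\<^sub>v (card S)"
      have "?y $ 0 = 0" unfolding zero using S_pos by simp
      thus False using nonzero by contradiction
    qed
  qed
  moreover have "?y \<in> carrier_vec (card S)" by simp
  ultimately show False using det_0_iff_vec_prod_zero_field[OF B] by blast
qed

text \<open>Uncertainty principle: x and A x together have at least m + 1 nonzero entries,
  since the m - vnz (A x) zero entries of A x are fewer than vnz x.\<close>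
lemma support_uncertainty:
  fixes A :: "'a::field mat"
  assumes A: "A \<in> carrier_mat m n" and ns: "all_square_submatrices_nonsingular A"
    and x: "x \<in> carrier_vec n" and x0: "x \<noteq> 0\<^sub>v n"
  shows "m + 1 \<le> vnz (A *\<^sub>v x) + vnz x"
proof -
  let ?Z = "{i. i < m \<and> (A *\<^sub>v x) $ i = 0}"
  have "vec_support (A *\<^sub>v x) = {..<m} - ?Z" using A by (auto simp: vec_support_def)
  hence "vnz (A *\<^sub>v x) = m - card ?Z"
    unfolding vnz_def using card_Diff_subset[of ?Z "{..<m}"] by auto
  moreover have "card ?Z \<le> m" using card_mono[of "{..<m}" ?Z] by auto
  ultimately show ?thesis using zeros_of_product_lt_support[OF assms] by linarith
qed

text \<open>The rank is n: the leading n x n minor is nonsingular.\<close>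
lemma rank_full:
  fixes A :: "'a::field mat"
  assumes A: "A \<in> carrier_mat m n" and mn: "n \<le> m" and ns: "all_square_submatrices_nonsingular A"
  shows "vec_space.rank m A = n"
proof (cases "n = 0")
  case True
  thus ?thesis using vec_space.rank_le_nc[OF A] by simp
next
  case False
  have "det (submatrix A {..<n} {..<n}) \<noteq> 0"
    using ns A mn False unfolding all_square_submatrices_nonsingular_def by auto
  from vec_space.rank_gt_minor[OF A this] have "n \<le> vec_space.rank m A" by simp
  thus ?thesis using vec_space.rank_le_nc[OF A] by simp
qed

text \<open>Complete unsparsifiability: every column of A X has at least m - n + 1 nonzeros.\<close>
lemma completely_unsparsifiable:
  fixes A :: "'a::field mat"
  assumes A: "A \<in> carrier_mat m n" and mn: "n \<le> m" and ns: "all_square_submatrices_nonsingular A"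
    and X: "X \<in> carrier_mat n n" and inv: "invertible_mat X"
  shows "(m - n + 1) * n \<le> nnz (A * X)"
proof -
  have "m - n + 1 \<le> vnz (col (A * X) j)" if j: "j < n" for j
  proof -
    have x: "col X j \<in> carrier_vec n" using X j by simp
    have product: "col (A * X) j = A *\<^sub>v col X j" by (rule col_mult2[OF A X j])
    have "m + 1 \<le> vnz (A *\<^sub>v col X j) + vnz (col X j)"
      using support_uncertainty[OF A ns x invertible_col_nonzero[OF X inv j]] .
    moreover have "vnz (col X j) \<le> n" using vnz_le_dim[of "col X j"] X by simp
    ultimately show ?thesis unfolding product using mn by linarith
  qed
  hence "n * (m - n + 1) \<le> nnz (A * X)"
    by (rule nnz_lower_bound[OF mult_carrier_mat[OF A X]])
  thus ?thesis by (simp only: mult.commute)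
qed

text \<open>Optimal sparsity of the identity stacked above A: each of its columns has at
  most m + 1 nonzeros, while each column of (I; A) X has at least m + 1.\<close>
lemma stacked_identity_optimally_sparse:
  fixes A :: "'a::field mat"
  assumes A: "A \<in> carrier_mat m n" and ns: "all_square_submatrices_nonsingular A"
  shows "optimally_sparse (1\<^sub>m n @\<^sub>r A)"
  unfolding optimally_sparse_def
proof (intro ballI impI)
  let ?B = "1\<^sub>m n @\<^sub>r A"
  have B: "?B \<in> carrier_mat (n + m) n" using A by auto
  fix X :: "'a mat" assume "X \<in> carrier_mat (dim_col ?B) (dim_col ?B)" and inv: "invertible_mat X"
  hence X: "X \<in> carrier_mat n n" using B by simp
  have "vnz (col ?B j) \<le> m + 1" if j: "j < n" for j
  proof -
    have "vnz (col ?B j) = vnz (unit_vec n j :: 'a vec) + vnz (col A j)"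
      using col_append_rows[OF one_carrier_mat A j] j by (simp add: vnz_append)
    thus ?thesis using vnz_unit_vec[of n j, where 'a = 'a] vnz_le_dim[of "col A j"] A by simp
  qed
  hence "nnz ?B \<le> n * (m + 1)" by (rule nnz_upper_bound[OF B])
  moreover have "m + 1 \<le> vnz (col (?B * X) j)" if j: "j < n" for j
  proof -
    have x: "col X j \<in> carrier_vec n" using X j by simp
    have "col (?B * X) j = ?B *\<^sub>v col X j" by (rule col_mult2[OF B X j])
    also have "\<dots> = (1\<^sub>m n *\<^sub>v col X j) @\<^sub>v (A *\<^sub>v col X j)"
      by (rule mat_mult_append[OF one_carrier_mat A x])
    also have "1\<^sub>m n *\<^sub>v col X j = col X j" using x by simp
    finally have stacked: "col (?B * X) j = col X j @\<^sub>v (A *\<^sub>v col X j)" .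
    show ?thesis
      using support_uncertainty[OF A ns x invertible_col_nonzero[OF X inv j]]
      unfolding stacked vnz_append by linarith
  qed
  hence "n * (m + 1) \<le> nnz (?B * X)"
    by (rule nnz_lower_bound[OF mult_carrier_mat[OF B X]])
  ultimately show "nnz ?B \<le> nnz (?B * X)" by linarith
qed

theorem mainTheorem4:
  fixes A :: "'a :: field mat" and m n :: nat
  assumes "A \<in> carrier_mat m n"
    and "m \<ge> n"
    and "all_square_submatrices_nonsingular A"
  shows "vec_space.rank m A = n
         \<and> (\<forall>X \<in> carrier_mat n n. invertible_mat X \<longrightarrow> nnz (A * X) \<ge> (m - n + 1) * n)
         \<and> optimally_sparse (1\<^sub>m n @\<^sub>r A)"
proof (intro conjI ballI impI)
  show "vec_space.rank m A = n" by (rule rank_full[OF assms])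
  show "nnz (A * X) \<ge> (m - n + 1) * n" if "X \<in> carrier_mat n n" and "invertible_mat X" for X
    by (rule completely_unsparsifiable[OF assms that])
  show "optimally_sparse (1\<^sub>m n @\<^sub>r A)"
    by (rule stacked_identity_optimally_sparse[OF assms(1,3)])
qed

end
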